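(* Fix $s\in\mathbb{R}$ and a continuous $1$-periodic function $\tilde q$ with $\int_0^1\tilde q=0$. Suppose that for $\lambda$ in an open interval there are a real number $q_0(\lambda)$ and $1$-periodic $C^1$ functions $\tilde p(\lambda,\cdot)$ with $\int_0^1\tilde p(\lambda,x)\,dx=0$, depending differentiably on $\lambda$ (with $\partial_\lambda\tilde p$ and $\partial_\lambda\tilde p'$ continuous), such that \[ q_0(\lambda)=\lambda+\int_0^1\tilde p(\lambda,x)^2\,dx+s^2,\qquad \tilde q=\tilde p'+\tilde p^2-\int_0^1\tilde p^2+2s\tilde p \] (equivalently, $p=\tilde p+s$ is a periodic solution with $\int_0^1p=s$ of the Riccati equation $q_0+\tilde q=\lambda+p'+p^2$). Then $\frac{\partial q_0}{\partial\lambda}=1$; that is, the Jacobian of the transformation $(q_0,\tilde q,s)\mapsto(\lambda,\tilde q,s)$ is one. *)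

theory Defs
  imports "HOL-Analysis.Analysis"
begin

end

theory Submission
  imports Defs
begin

(* The mean of p^2 does not depend on lambda, so q0 lambda - lambda is constant; no
   differentiability in lambda is needed. For two parameters, the difference D of the two
   solutions is periodic with mean zero and solves the linear equation D' = c - (p1 + p2 + 2 s) D,
   where c is the difference of the two means of p^2. With an integrating factor exp F, where
   F' = p1 + p2 + 2 s, the function exp F * D is strictly monotone when c \<noteq> 0; but it vanishes
   at a zero of D and, by periodicity, takes values of the same sign at both ends of a period. *)

lemma continuous_on_integral_eq_0_imp_zero:
  fixes f :: "real \<Rightarrow> real"
  assumes f: "continuous_on {u..v} f" and "u < v" and int: "integral {u..v} f = 0"
  shows "\<exists>x\<in>{u..v}. f x = 0"
proof -
  have no_positive: False if g: "continuous_on {u..v} g" "integral {u..v} g = 0"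
      "\<And>x. x \<in> {u..v} \<Longrightarrow> g x > 0" for g :: "real \<Rightarrow> real"
  proof -
    have "(g has_integral 0) (cbox u v)"
      using integrable_integral[OF integrable_continuous_real[OF g(1)]] g(2) by simp
    then have "g u = 0"
      using g \<open>u < v\<close> by (intro has_integral_0_cbox_imp_0[of u v g]) (auto simp: less_imp_le)
    then show False using g(3)[of u] \<open>u < v\<close> by simp
  qed
  show ?thesis
  proof (rule ccontr)
    assume "\<not> (\<exists>x\<in>{u..v}. f x = 0)"
    then have nonzero: "0 \<notin> f ` {u..v}" by auto
    have "connected (f ` {u..v})"
      using f by (intro connected_continuous_image) auto
    then have "(\<forall>x\<in>{u..v}. f x > 0) \<or> (\<forall>x\<in>{u..v}. f x < 0)"
      using nonzero unfolding connected_iff_interval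
      by (metis image_eqI linorder_neqE less_imp_le)
    then show False
    proof
      assume "\<forall>x\<in>{u..v}. f x > 0"
      then show False using no_positive[OF f int] by blast
    next
      assume "\<forall>x\<in>{u..v}. f x < 0"
      then show False using no_positive[OF continuous_on_minus[OF f]] int by simp
    qed
  qed
qed

lemma linear_ode_periodic_mean_zero_imp_const_eq_0:
  fixes D Q :: "real \<Rightarrow> real"
  assumes D': "\<And>x. (D has_real_derivative c - Q x * D x) (at x)"
    and Q: "continuous_on UNIV Q" and "u < v"
    and D_per: "D v = D u" and D_mean: "integral {u..v} D = 0"
  shows "c = 0"
proof -
  obtain F where F': "\<And>x. (F has_real_derivative Q x) (at x)"
  proof -
    have "\<exists>F. \<forall>x::real. -\<infinity> < ereal x \<longrightarrow> ereal x < \<infinity> \<longrightarrow> (F has_vector_derivative Q x) (at x)"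
      using Q by (intro einterval_antiderivative) (auto simp: continuous_on_eq_continuous_at)
    then show thesis
      using that by (auto simp: has_real_derivative_iff_has_vector_derivative)
  qed
  have no_positive: False if "c > 0" and E': "\<And>x. (E has_real_derivative c - Q x * E x) (at x)"
    and "E v = E u" and "integral {u..v} E = 0" for E c
  proof -
    define G where "G x = exp (F x) * E x" for x
    have G': "(G has_real_derivative c * exp (F x)) (at x)" for x
    proof -
      have "(G has_real_derivative exp (F x) * Q x * E x + exp (F x) * (c - Q x * E x)) (at x)"
        unfolding G_def by (auto intro!: derivative_eq_intros F' E')
      then show ?thesis by (simp add: algebra_simps)
    qed
    have G_less: "G x < G y" if "x < y" for x y
      using DERIV_pos_imp_increasing[OF that, of G] G' \<open>c > 0\<close> by force
    have "continuous_on {u..v} E"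
      using E' by (meson DERIV_isCont continuous_at_imp_continuous_on)
    then obtain z where "z \<in> {u..v}" "E z = 0"
      using continuous_on_integral_eq_0_imp_zero \<open>u < v\<close> \<open>integral {u..v} E = 0\<close> by blast
    then have "G u \<le> 0" "0 \<le> G v"
      using G_less[of u z] G_less[of z v] by (auto simp: G_def le_less)
    moreover have "G v = exp (F v - F u) * G u"
      using \<open>E v = E u\<close> by (simp add: G_def exp_diff)
    ultimately show False
      using G_less[OF \<open>u < v\<close>] by (simp add: zero_le_mult_iff)
  qed
  show "c = 0"
  proof (rule linorder_cases[of c 0])
    assume "c < 0"
    have "((\<lambda>x. - D x) has_real_derivative - c - Q x * - D x) (at x)" for x
      using DERIV_minus[OF D'[of x]] by simp
    then show ?thesis
      using no_positive[of "- c" "\<lambda>x. - D x"] \<open>c < 0\<close> D_per D_mean by simp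
  next
    assume "c > 0"
    then show ?thesis using no_positive D' D_per D_mean by blast
  qed
qed

lemma riccati_periodic_equal_means_imp_const_eq:
  fixes p q dp dq :: "real \<Rightarrow> real"
  assumes p': "\<And>x. (p has_real_derivative dp x) (at x)"
    and q': "\<And>x. (q has_real_derivative dq x) (at x)"
    and riccati: "\<And>x. dp x + (p x)\<^sup>2 - c + 2 * s * p x = dq x + (q x)\<^sup>2 - d + 2 * s * q x"
    and "u < v" and "p v = p u" and "q v = q u"
    and means: "integral {u..v} p = integral {u..v} q"
  shows "c = d"
proof -
  have cont: "continuous_on UNIV p" "continuous_on UNIV q"
    using p' q' by (meson DERIV_isCont continuous_at_imp_continuous_on)+
  have D': "((\<lambda>x. p x - q x) has_real_derivative
          (c - d) - (p x + q x + 2 * s) * (p x - q x)) (at x)" for x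
  proof -
    have "dp x - dq x = (c - d) - (p x + q x + 2 * s) * (p x - q x)"
      using riccati[of x] by (simp add: algebra_simps power2_eq_square)
    then show ?thesis
      using DERIV_diff[OF p'[of x] q'[of x]] by simp
  qed
  have Q: "continuous_on UNIV (\<lambda>x. p x + q x + 2 * s)"
    using cont by (intro continuous_intros)
  have "continuous_on {u..v} p" "continuous_on {u..v} q"
    using cont continuous_on_subset by blast+
  then have "integral {u..v} (\<lambda>x. p x - q x) = integral {u..v} p - integral {u..v} q"
    by (simp add: integral_diff integrable_continuous_real)
  then have mean: "integral {u..v} (\<lambda>x. p x - q x) = 0"
    using means by simp
  have "c - d = 0"
    using linear_ode_periodic_mean_zero_imp_const_eq_0[OF D' Q \<open>u < v\<close> _ mean]
      \<open>p v = p u\<close> \<open>q v = q u\<close> by simp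
  then show ?thesis by simp
qed

theorem lemma1:
  fixes s a b :: real
    and qt :: "real \<Rightarrow> real"
    and q0 :: "real \<Rightarrow> real"
    and p dp pl dpl :: "real \<Rightarrow> real \<Rightarrow> real"
  assumes "a < b"
    and qt_cont: "continuous_on UNIV qt"
    and qt_per: "\<And>x. qt (x + 1) = qt x"
    and qt_mean: "integral {0..1} qt = 0"
    and p_per: "\<And>l x. l \<in> {a<..<b} \<Longrightarrow> p l (x + 1) = p l x"
    and p_deriv: "\<And>l x. l \<in> {a<..<b} \<Longrightarrow> (p l has_real_derivative dp l x) (at x)"
    and dp_cont: "\<And>l. l \<in> {a<..<b} \<Longrightarrow> continuous_on UNIV (dp l)"
    and p_mean: "\<And>l. l \<in> {a<..<b} \<Longrightarrow> integral {0..1} (p l) = 0"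
    and p_lderiv: "\<And>l x. l \<in> {a<..<b} \<Longrightarrow>
                   ((\<lambda>m. p m x) has_real_derivative pl l x) (at l)"
    and dp_lderiv: "\<And>l x. l \<in> {a<..<b} \<Longrightarrow>
                   ((\<lambda>m. dp m x) has_real_derivative dpl l x) (at l)"
    and pl_cont: "continuous_on ({a<..<b} \<times> UNIV) (\<lambda>(l, x). pl l x)"
    and dpl_cont: "continuous_on ({a<..<b} \<times> UNIV) (\<lambda>(l, x). dpl l x)"
    and q0_eq: "\<And>l. l \<in> {a<..<b} \<Longrightarrow>
                q0 l = l + integral {0..1} (\<lambda>x. (p l x)\<^sup>2) + s\<^sup>2"
    and riccati: "\<And>l x. l \<in> {a<..<b} \<Longrightarrow>
                qt x = dp l x + (p l x)\<^sup>2 - integral {0..1} (\<lambda>y. (p l y)\<^sup>2) + 2 * s * p l x"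
  shows "\<forall>l \<in> {a<..<b}. (q0 has_real_derivative 1) (at l)"
proof
  fix l assume l: "l \<in> {a<..<b}"
  let ?I = "\<lambda>m. integral {0..1} (\<lambda>x. (p m x)\<^sup>2)"
  have "?I m = ?I l" if m: "m \<in> {a<..<b}" for m
  proof (rule riccati_periodic_equal_means_imp_const_eq
      [where p = "p m" and dp = "dp m" and q = "p l" and dq = "dp l" and s = s and u = 0 and v = 1])
    show "dp m x + (p m x)\<^sup>2 - ?I m + 2 * s * p m x = dp l x + (p l x)\<^sup>2 - ?I l + 2 * s * p l x"
      for x using riccati[OF m, of x] riccati[OF l, of x] by simp
  qed (use p_deriv[OF m] p_deriv[OF l] p_per[OF m, of 0] p_per[OF l, of 0]
         p_mean[OF m] p_mean[OF l] in simp_all)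
  then have q0_affine: "m + ?I l + s\<^sup>2 = q0 m" if "m \<in> {a<..<b}" for m
    using q0_eq that by simp
  have "((\<lambda>m. m + ?I l + s\<^sup>2) has_real_derivative 1) (at l)"
    by (auto intro!: derivative_eq_intros)
  from has_field_derivative_transform_within_open[OF this _ l q0_affine]
  show "(q0 has_real_derivative 1) (at l)"
    by simp
qed

end
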